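(* Let $R$ be a commutative ring and $p$ a prime. Define $I_0=R$ and, for $i>0$, $I_i=\{r\in R: r^p\in pI_{i-1}\}$. Then for each $i\ge0$ the set $I_i$ is an ideal of $R$. *)

theory Defs
  imports "HOL-Algebra.Algebra" "HOL-Computational_Algebra.Primes"
begin

fun Iseq :: "('a, 'b) ring_scheme \<Rightarrow> nat \<Rightarrow> nat \<Rightarrow> 'a set" where
  "Iseq R p 0 = carrier R"
| "Iseq R p (Suc i) =
     {r \<in> carrier R. \<exists>a \<in> Iseq R p i.
        r [^]\<^bsub>R\<^esub> p = (add_pow R p \<one>\<^bsub>R\<^esub>) \<otimes>\<^bsub>R\<^esub> a}"

end

theory Submission
  imports Defs
begin

text \<open>Since \<open>p\<close> divides \<open>p choose k\<close> for \<open>0 < k < p\<close>, the binomial theorem gives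
  \<open>(a + b)\<^sup>p = a\<^sup>p + b\<^sup>p + p a t\<close> for some \<open>t\<close>. Hence, by induction on \<open>i\<close>: if \<open>I\<^sub>i\<close> is an ideal
  and \<open>r, s \<in> I\<^sub>i\<^sub>+\<^sub>1 \<subseteq> I\<^sub>i\<close> with \<open>r\<^sup>p = p a\<close>, \<open>s\<^sup>p = p b\<close>, then \<open>(r + s)\<^sup>p = p (a + b + r t)\<close>
  with \<open>a + b + r t \<in> I\<^sub>i\<close>; closure under multiplication follows from \<open>(x r)\<^sup>p = p (x\<^sup>p a)\<close>.\<close>

lemma (in cring) binomial_theorem:
  assumes a: "a \<in> carrier R" and b: "b \<in> carrier R"
  shows "(a \<oplus> b) [^] n = (\<Oplus>k\<in>{..n}. add_pow R (n choose k) (a [^] k \<otimes> b [^] (n - k)))"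
proof (induction n)
  case 0
  then show ?case using a b by simp
next
  case (Suc n)
  define f where "f k = add_pow R (n choose k) (a [^] Suc k \<otimes> b [^] (n - k))" for k
  define g where "g k = add_pow R (n choose k) (a [^] k \<otimes> b [^] (Suc n - k))" for k
  define F where "F k = add_pow R (Suc n choose k) (a [^] k \<otimes> b [^] (Suc n - k))" for k
  have carr: "f \<in> A \<rightarrow> carrier R" "g \<in> A \<rightarrow> carrier R" "F \<in> A \<rightarrow> carrier R" for A
    using a b by (auto simp: f_def g_def F_def)
  let ?S = "\<Oplus>k\<in>{..n}. add_pow R (n choose k) (a [^] k \<otimes> b [^] (n - k))"
  have S_carr: "(\<lambda>k. add_pow R (n choose k) (a [^] k \<otimes> b [^] (n - k))) \<in> {..n} \<rightarrow> carrier R"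
    using a b by auto
  have "(a \<oplus> b) [^] Suc n = ?S \<otimes> a \<oplus> ?S \<otimes> b"
    using Suc a b by (simp add: r_distr)
  also have "?S \<otimes> a = (\<Oplus>k\<in>{..n}. f k)"
    unfolding finsum_ldistr[OF finite_atMost a S_carr]
    by (rule finsum_cong') (use a b in \<open>auto simp: f_def add_pow_ldistr add_pow_rdistr m_ac\<close>)
  also have "?S \<otimes> b = (\<Oplus>k\<in>{..n}. g k)"
    unfolding finsum_ldistr[OF finite_atMost b S_carr]
    by (rule finsum_cong') (use a b in \<open>auto simp: g_def add_pow_ldistr add_pow_rdistr m_ac Suc_diff_le\<close>)
  also have "(\<Oplus>k\<in>{..n}. g k) = (\<Oplus>k\<in>{..Suc n}. g k)"
  proof -
    have "g (Suc n) = \<zero>" by (simp add: g_def binomial_eq_0)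
    then show ?thesis using finsum_closed[OF carr(2)] by (simp add: finsum_Suc[OF carr(2)])
  qed
  also have "\<dots> = (\<Oplus>k\<in>{..n}. g (Suc k)) \<oplus> g 0"
    by (rule finsum_Suc2[OF carr(2)])
  also have "(\<Oplus>k\<in>{..n}. f k) \<oplus> ((\<Oplus>k\<in>{..n}. g (Suc k)) \<oplus> g 0)
             = (\<Oplus>k\<in>{..n}. f k \<oplus> g (Suc k)) \<oplus> F 0"
  proof -
    have g_Suc: "(\<lambda>k. g (Suc k)) \<in> {..n} \<rightarrow> carrier R" using carr(2) by auto
    have "F 0 = g 0" by (simp add: F_def g_def)
    moreover have "g 0 \<in> carrier R" using b by (simp add: g_def)
    ultimately show ?thesis using finsum_closed[OF carr(1)] finsum_closed[OF g_Suc]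
      by (simp add: finsum_addf[OF carr(1) g_Suc] a_assoc)
  qed
  also have "(\<Oplus>k\<in>{..n}. f k \<oplus> g (Suc k)) = (\<Oplus>k\<in>{..n}. F (Suc k))"
    by (rule finsum_cong') (use a b in \<open>auto simp: f_def g_def F_def add.nat_pow_mult\<close>)
  also have "(\<Oplus>k\<in>{..n}. F (Suc k)) \<oplus> F 0 = (\<Oplus>k\<in>{..Suc n}. F k)"
    by (rule finsum_Suc2[OF carr(3), symmetric])
  finally show ?case unfolding F_def .
qed

lemma (in cring) binomial_term_prime:
  assumes a: "a \<in> carrier R" and b: "b \<in> carrier R"
    and p: "Factorial_Ring.prime (p::nat)" and k: "0 < k" "k < p"
  shows "add_pow R (p choose k) (a [^] k \<otimes> b [^] (p - k))
         = add_pow R p \<one> \<otimes> (a \<otimes> add_pow R ((p choose k) div p) (a [^] (k - 1) \<otimes> b [^] (p - k)))"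
proof -
  define q where "q = (p choose k) div p"
  define y where "y = a [^] (k - 1) \<otimes> b [^] (p - k)"
  have y: "y \<in> carrier R" using a b by (simp add: y_def)
  have choose_eq: "p choose k = q * p"
    unfolding q_def using dvd_choose_prime[of k p] k p by auto
  have "a [^] k = a \<otimes> a [^] (k - 1)"
    using k a nat_pow_Suc2[of a "k - 1"] by simp
  then have "a [^] k \<otimes> b [^] (p - k) = a \<otimes> y"
    using a b by (simp add: m_assoc y_def)
  then have "add_pow R (p choose k) (a [^] k \<otimes> b [^] (p - k)) = add_pow R p (add_pow R q (a \<otimes> y))"
    unfolding choose_eq using add.nat_pow_pow[of "a \<otimes> y" p q] a y by (simp add: mult.commute)
  also have "\<dots> = add_pow R p \<one> \<otimes> (a \<otimes> add_pow R q y)"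
    using a y add_pow_ldistr[of \<one> "a \<otimes> add_pow R q y" p] add_pow_rdistr[of a y q] by simp
  finally show ?thesis unfolding q_def y_def .
qed

lemma (in cring) pow_prime_add:
  assumes a: "a \<in> carrier R" and b: "b \<in> carrier R" and p: "Factorial_Ring.prime (p::nat)"
  shows "\<exists>t\<in>carrier R. (a \<oplus> b) [^] p = a [^] p \<oplus> b [^] p \<oplus> add_pow R p \<one> \<otimes> (a \<otimes> t)"
proof -
  obtain m where m: "p = Suc (Suc m)"
    using prime_ge_2_nat[OF p] by (metis add_2_eq_Suc le_Suc_ex)
  define T where "T k = add_pow R (p choose k) (a [^] k \<otimes> b [^] (p - k))" for k
  define h where "h k = add_pow R ((p choose Suc k) div p) (a [^] k \<otimes> b [^] (p - Suc k))" for k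
  have T_carr: "T \<in> A \<rightarrow> carrier R" for A using a b by (auto simp: T_def)
  have h_in: "h k \<in> carrier R" for k using a b by (simp add: h_def)
  then have h_carr: "h \<in> A \<rightarrow> carrier R" for A by blast
  have middle: "T (Suc k) = add_pow R p \<one> \<otimes> (a \<otimes> h k)" if "k \<le> m" for k
    using binomial_term_prime[OF a b p, of "Suc k"] that m by (simp add: T_def h_def)
  have "(a \<oplus> b) [^] p = (\<Oplus>k\<in>{..Suc (Suc m)}. T k)"
    unfolding binomial_theorem[OF a b] T_def m ..
  also have "\<dots> = (\<Oplus>k\<in>{..Suc m}. T (Suc k)) \<oplus> T 0"
    by (rule finsum_Suc2[OF T_carr])
  also have "(\<Oplus>k\<in>{..Suc m}. T (Suc k)) = T (Suc (Suc m)) \<oplus> (\<Oplus>k\<in>{..m}. T (Suc k))"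
    by (rule finsum_Suc) (use a b in \<open>simp add: T_def\<close>)
  also have "(\<Oplus>k\<in>{..m}. T (Suc k)) = (\<Oplus>k\<in>{..m}. add_pow R p \<one> \<otimes> (a \<otimes> h k))"
    by (rule finsum_cong') (use middle a h_in in auto)
  also have "\<dots> = add_pow R p \<one> \<otimes> (a \<otimes> (\<Oplus>k\<in>{..m}. h k))"
  proof -
    have "(\<lambda>k. a \<otimes> h k) \<in> {..m} \<rightarrow> carrier R" using a h_in by simp
    then show ?thesis
      using a by (simp add: finsum_rdistr[OF finite_atMost a h_carr] finsum_rdistr[OF finite_atMost])
  qed
  finally have "(a \<oplus> b) [^] p = a [^] p \<oplus> b [^] p \<oplus> add_pow R p \<one> \<otimes> (a \<otimes> (\<Oplus>k\<in>{..m}. h k))"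
    using a b finsum_closed[OF h_carr] by (simp add: T_def m a_ac)
  then show ?thesis using finsum_closed[OF h_carr] by blast
qed

lemma (in cring) cring_idealI:
  assumes "I \<subseteq> carrier R" and "\<zero> \<in> I"
    and add: "\<And>r s. r \<in> I \<Longrightarrow> s \<in> I \<Longrightarrow> r \<oplus> s \<in> I"
    and mult: "\<And>x r. x \<in> carrier R \<Longrightarrow> r \<in> I \<Longrightarrow> x \<otimes> r \<in> I"
  shows "ideal I R"
proof (rule idealI)
  show "subgroup I (add_monoid R)"
  proof (rule add.subgroupI)
    show "\<ominus> r \<in> I" if "r \<in> I" for r
      using mult[OF _ that, of "\<ominus> \<one>"] that assms(1) by (auto simp: l_minus)
  qed (use assms in auto)
  show "r \<otimes> x \<in> I" if "r \<in> I" "x \<in> carrier R" for r x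
    using mult[OF that(2,1)] that assms(1) by (auto simp: m_comm)
qed (use mult ring_axioms in auto)

definition pth_root :: "('a, 'b) ring_scheme \<Rightarrow> nat \<Rightarrow> 'a set \<Rightarrow> 'a set" where
  "pth_root R p J = {r \<in> carrier R. \<exists>a \<in> J. r [^]\<^bsub>R\<^esub> p = add_pow R p \<one>\<^bsub>R\<^esub> \<otimes>\<^bsub>R\<^esub> a}"

lemma Iseq_Suc: "Iseq R p (Suc i) = pth_root R p (Iseq R p i)"
  by (simp add: pth_root_def)

lemma pth_root_mono: "J \<subseteq> K \<Longrightarrow> pth_root R p J \<subseteq> pth_root R p K"
  unfolding pth_root_def by blast

lemma Iseq_Suc_subset: "Iseq R p (Suc i) \<subseteq> Iseq R p i"
proof (induction i)
  case 0
  show ?case by (auto simp: Iseq_Suc pth_root_def)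
next
  case (Suc i)
  then show ?case unfolding Iseq_Suc[of R p "Suc i"] Iseq_Suc[of R p i] by (rule pth_root_mono)
qed

lemma (in cring) ideal_pth_root:
  assumes J: "ideal J R" and p: "Factorial_Ring.prime (p::nat)" and sub: "pth_root R p J \<subseteq> J"
  shows "ideal (pth_root R p J) R"
proof -
  interpret J: ideal J R by (rule J)
  let ?P = "add_pow R p \<one>"
  have P: "?P \<in> carrier R" by simp
  show ?thesis
  proof (rule cring_idealI)
    show "\<zero> \<in> pth_root R p J"
      using p J.zero_closed P nat_pow_zero[of p]
      by (auto simp: pth_root_def prime_gt_0_nat intro!: bexI[of _ \<zero>])
  next
    fix r s assume r: "r \<in> pth_root R p J" and s: "s \<in> pth_root R p J"
    obtain a where a: "a \<in> J" "r [^] p = ?P \<otimes> a" and r_carr: "r \<in> carrier R"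
      using r by (auto simp: pth_root_def)
    obtain b where b: "b \<in> J" "s [^] p = ?P \<otimes> b" and s_carr: "s \<in> carrier R"
      using s by (auto simp: pth_root_def)
    obtain t where t: "t \<in> carrier R" "(r \<oplus> s) [^] p = r [^] p \<oplus> s [^] p \<oplus> ?P \<otimes> (r \<otimes> t)"
      using pow_prime_add[OF r_carr s_carr p] by blast
    have "(r \<oplus> s) [^] p = ?P \<otimes> (a \<oplus> b \<oplus> r \<otimes> t)"
      using t a b J.Icarr r_carr P by (simp add: r_distr)
    moreover have "a \<oplus> b \<oplus> r \<otimes> t \<in> J"
      using a b r sub t J.I_r_closed by (auto intro!: J.a_closed)
    ultimately show "r \<oplus> s \<in> pth_root R p J"
      using r_carr s_carr by (auto simp: pth_root_def)
  next
    fix x r assume x: "x \<in> carrier R" and r: "r \<in> pth_root R p J"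
    obtain a where a: "a \<in> J" "r [^] p = ?P \<otimes> a" and r_carr: "r \<in> carrier R"
      using r by (auto simp: pth_root_def)
    have "(x \<otimes> r) [^] p = ?P \<otimes> (x [^] p \<otimes> a)"
      using x r_carr a J.Icarr P by (simp add: nat_pow_distrib m_lcomm)
    then show "x \<otimes> r \<in> pth_root R p J"
      using x r_carr a J.I_l_closed by (auto simp: pth_root_def)
  qed (auto simp: pth_root_def)
qed

theorem lemma2p2:
  fixes R (structure) and p :: nat and i :: nat
  assumes "cring R" and "Factorial_Ring.prime p"
  shows "ideal (Iseq R p i) R"
proof (induction i)
  case 0
  show ?case using cring.axioms(1)[OF assms(1)] by (simp add: ring.oneideal)
next
  case (Suc i)
  have "pth_root R p (Iseq R p i) \<subseteq> Iseq R p i"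
    using Iseq_Suc_subset[of R p i] unfolding Iseq_Suc .
  then show ?case
    unfolding Iseq_Suc by (rule cring.ideal_pth_root[OF assms(1) Suc assms(2)])
qed

end
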